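(* Let $m\ge n$, let $a<b$ be real numbers, and let $F:[a,b]\rightarrow M_{m\times n}(\mathbb{C})$ be a function whose entries are analytic functions on $[a,b]$. Let $\mathcal{W}$ be the set of $x\in[a,b]$ for which $F(x)$ has repeated singular values. Then either $\mathcal{W}=[a,b]$ or $\mathcal{W}$ is finite.
   Context: $M_{m\times n}(\mathbb{C})$ denotes the set of $m\times n$ complex matrices; throughout $m\ge n$. The singular values of $A\in M_{m\times n}(\mathbb{C})$ are the $n$ nonnegative square roots of the eigenvalues of $A^{\ast}A$, counted with multiplicity; repeated means two of them coincide. A complex-valued function is analytic on $[a,b]$ if it is the restriction of a function defined on an open interval containing $[a,b]$ which around each point is given by a convergent power series. *)

theory Defs
  imports "Jordan_Normal_Form.Char_Poly"
begin

definition conj_transpose :: "complex mat \<Rightarrow> complex mat" where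
  "conj_transpose A = transpose_mat (map_mat cnj A)"

text \<open>The eigenvalues of A^* A are real and nonnegative, so taking the real part is harmless.\<close>
definition singular_values :: "complex mat \<Rightarrow> real multiset" where
  "singular_values A =
     image_mset (\<lambda>z. sqrt (Re z)) (proots (char_poly (conj_transpose A * A)))"

definition has_repeated_singular_values :: "complex mat \<Rightarrow> bool" where
  "has_repeated_singular_values A \<longleftrightarrow> (\<exists>s. 2 \<le> count (singular_values A) s)"

definition analytic_on_interval :: "real \<Rightarrow> real \<Rightarrow> (real \<Rightarrow> complex) \<Rightarrow> bool" where
  "analytic_on_interval a b f \<longleftrightarrow>
     (\<exists>c d g. c < a \<and> b < d \<and> (\<forall>x\<in>{a..b}. g x = f x) \<and>
        (\<forall>x0\<in>{c<..<d}. \<exists>r>0. \<exists>coef :: nat \<Rightarrow> complex.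
            \<forall>x. c < x \<and> x < d \<and> \<bar>x - x0\<bar> < r \<longrightarrow>
                (\<lambda>k. coef k * complex_of_real (x - x0) ^ k) sums g x))"

end

(*
  The singular values of F x are repeated exactly when the eigenvalues of B x = F(x)\<^sup>* F(x),
  which are nonnegative reals, are repeated, i.e. when the squared Vandermonde determinant of
  these eigenvalues vanishes. That determinant is det (tr (B x ^ (i + j)))\<^sub>i\<^sub>j, a polynomial in the
  entries of F x and their conjugates, hence a real-analytic function of x. A real-analytic
  function on [a, b] whose zeros accumulate vanishes on a neighbourhood of the accumulation
  point (identity theorem for a local holomorphic extension); by connectedness of [a, b] it
  then vanishes everywhere, and otherwise compactness leaves only finitely many zeros.
*)
theory Submission
  imports Defs "Jordan_Normal_Form.Schur_Decomposition" "HOL-Complex_Analysis.Conformal_Mappings"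
begin

section \<open>Real-analytic functions\<close>

text \<open>Real analyticity phrased through local holomorphic extensions, which makes the complex
  identity theorem available.\<close>
definition real_analytic_on :: "(real \<Rightarrow> complex) \<Rightarrow> real set \<Rightarrow> bool"
    (infixl \<open>real'_analytic'_on\<close> 50) where
  "h real_analytic_on S \<longleftrightarrow>
     (\<forall>x\<in>S. \<exists>r>0. \<exists>g. g holomorphic_on ball (complex_of_real x) r \<and>
        (\<forall>y\<in>ball x r. g (complex_of_real y) = h y))"

lemma real_analytic_on_const: "(\<lambda>x. c) real_analytic_on S"
  unfolding real_analytic_on_def by (intro ballI exI[of _ 1] conjI exI[of _ "\<lambda>_. c"]) auto

lemma real_analytic_on_binop:
  assumes f: "f real_analytic_on S" and g: "g real_analytic_on S"
    and op: "\<And>F G U. F holomorphic_on U \<Longrightarrow> G holomorphic_on U \<Longrightarrow> (\<lambda>z. H (F z) (G z)) holomorphic_on U"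
  shows "(\<lambda>x. H (f x) (g x)) real_analytic_on S"
  unfolding real_analytic_on_def
proof
  fix x assume "x \<in> S"
  with f g obtain r1 F r2 G where
    "r1 > 0" "F holomorphic_on ball (complex_of_real x) r1" "\<forall>y\<in>ball x r1. F (complex_of_real y) = f y"
    "r2 > 0" "G holomorphic_on ball (complex_of_real x) r2" "\<forall>y\<in>ball x r2. G (complex_of_real y) = g y"
    unfolding real_analytic_on_def by meson
  then show "\<exists>r>0. \<exists>K. K holomorphic_on ball (complex_of_real x) r \<and>
      (\<forall>y\<in>ball x r. K (complex_of_real y) = H (f y) (g y))"
    by (intro exI[of _ "min r1 r2"] exI[of _ "\<lambda>z. H (F z) (G z)"] conjI op)
       (auto elim: holomorphic_on_subset)
qed

lemma real_analytic_on_add: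
  "f real_analytic_on S \<Longrightarrow> g real_analytic_on S \<Longrightarrow> (\<lambda>x. f x + g x) real_analytic_on S"
  by (rule real_analytic_on_binop[where H = "(+)"]) (auto intro: holomorphic_on_add)

lemma real_analytic_on_mult:
  "f real_analytic_on S \<Longrightarrow> g real_analytic_on S \<Longrightarrow> (\<lambda>x. f x * g x) real_analytic_on S"
  by (rule real_analytic_on_binop[where H = "(*)"]) (auto intro: holomorphic_on_mult)

lemma real_analytic_on_sum:
  "finite I \<Longrightarrow> (\<And>i. i \<in> I \<Longrightarrow> f i real_analytic_on S) \<Longrightarrow> (\<lambda>x. \<Sum>i\<in>I. f i x) real_analytic_on S"
  by (induction I rule: finite_induct) (auto intro: real_analytic_on_const real_analytic_on_add)

lemma real_analytic_on_prod:
  "finite I \<Longrightarrow> (\<And>i. i \<in> I \<Longrightarrow> f i real_analytic_on S) \<Longrightarrow> (\<lambda>x. \<Prod>i\<in>I. f i x) real_analytic_on S"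
  by (induction I rule: finite_induct) (auto intro: real_analytic_on_const real_analytic_on_mult)

lemma cnj_image_ball_of_real: "cnj ` ball (complex_of_real x) r = ball (complex_of_real x) r"
proof -
  have "dist (complex_of_real x) (cnj z) = dist (complex_of_real x) z" for z
    by (metis complex_cnj_complex_of_real complex_cnj_diff complex_mod_cnj dist_norm)
  then show ?thesis
    by (auto simp: image_cnj_conv_vimage_cnj)
qed

lemma real_analytic_on_cnj:
  assumes "h real_analytic_on S"
  shows "(\<lambda>x. cnj (h x)) real_analytic_on S"
  unfolding real_analytic_on_def
proof
  fix x assume "x \<in> S"
  with assms obtain r g where "r > 0" and g: "g holomorphic_on ball (complex_of_real x) r"
    and gh: "\<forall>y\<in>ball x r. g (complex_of_real y) = h y"
    unfolding real_analytic_on_def by meson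
  have "cnj \<circ> g \<circ> cnj holomorphic_on ball (complex_of_real x) r"
    by (rule holomorphic_on_compose_cnj_cnj) (use g in \<open>simp_all add: cnj_image_ball_of_real\<close>)
  with \<open>r > 0\<close> gh show "\<exists>r>0. \<exists>g. g holomorphic_on ball (complex_of_real x) r \<and>
      (\<forall>y\<in>ball x r. g (complex_of_real y) = cnj (h y))"
    by (intro exI[of _ r] exI[of _ "cnj \<circ> g \<circ> cnj"]) auto
qed

lemma real_power_series_holomorphic_extension:
  assumes sums: "\<And>y. y \<in> ball x r \<Longrightarrow> (\<lambda>k. c k * complex_of_real (y - x) ^ k) sums h y"
  shows "\<exists>g. g holomorphic_on ball (complex_of_real x) r \<and>
           (\<forall>y\<in>ball x r. g (complex_of_real y) = h y)"
proof -
  define g where "g w = (\<Sum>k. c k * (w - complex_of_real x) ^ k)" for w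
  have g_sums: "(\<lambda>k. c k * (w - complex_of_real x) ^ k) sums g w"
    if "w \<in> ball (complex_of_real x) r" for w
  proof -
    define d where "d = norm (w - complex_of_real x)"
    define \<rho> where "\<rho> = (d + r) / 2"
    have "0 \<le> d" "d < r"
      using that by (auto simp: d_def dist_norm norm_minus_commute)
    then have "d < \<rho>" "x + \<rho> \<in> ball x r"
      by (auto simp: \<rho>_def dist_real_def)
    with sums have "summable (\<lambda>k. c k * complex_of_real \<rho> ^ k)"
      by (force dest: sums_summable)
    then have "summable (\<lambda>k. c k * (w - complex_of_real x) ^ k)"
      by (rule powser_inside) (use \<open>0 \<le> d\<close> \<open>d < \<rho>\<close> in \<open>simp add: d_def\<close>)
    then show ?thesis
      by (simp add: g_def summable_sums)
  qed
  have "g holomorphic_on ball (complex_of_real x) r"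
    by (rule power_series_holomorphic) (rule g_sums)
  moreover have "g (complex_of_real y) = h y" if "y \<in> ball x r" for y
    using g_sums[of "complex_of_real y"] sums[OF that] that
    by (simp add: sums_unique2 flip: of_real_diff)
  ultimately show ?thesis
    by blast
qed

lemma analytic_on_interval_imp_real_analytic_on:
  assumes "analytic_on_interval a b f"
  obtains g where "g real_analytic_on {a..b}" "\<forall>x\<in>{a..b}. g x = f x"
proof -
  from assms obtain c d g where "c < a" "b < d" and gf: "\<forall>x\<in>{a..b}. g x = f x"
    and ps: "\<forall>x0\<in>{c<..<d}. \<exists>r>0. \<exists>coef :: nat \<Rightarrow> complex.
            \<forall>x. c < x \<and> x < d \<and> \<bar>x - x0\<bar> < r \<longrightarrow>
                (\<lambda>k. coef k * complex_of_real (x - x0) ^ k) sums g x"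
    unfolding analytic_on_interval_def by blast
  have "g real_analytic_on {a..b}"
    unfolding real_analytic_on_def
  proof
    fix x assume x: "x \<in> {a..b}"
    with \<open>c < a\<close> \<open>b < d\<close> have "x \<in> {c<..<d}"
      by auto
    with ps obtain r coef where "r > 0" and coef:
      "\<forall>y. c < y \<and> y < d \<and> \<bar>y - x\<bar> < r \<longrightarrow> (\<lambda>k. coef k * complex_of_real (y - x) ^ k) sums g y"
      by blast
    define r' where "r' = min r (min (x - c) (d - x))"
    have "r' > 0"
      using \<open>r > 0\<close> x \<open>c < a\<close> \<open>b < d\<close> by (auto simp: r'_def)
    moreover have "\<exists>G. G holomorphic_on ball (complex_of_real x) r' \<and>
        (\<forall>y\<in>ball x r'. G (complex_of_real y) = g y)"
    proof (rule real_power_series_holomorphic_extension)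
      fix y assume "y \<in> ball x r'"
      then have "c < y \<and> y < d \<and> \<bar>y - x\<bar> < r"
        by (auto simp: r'_def dist_real_def abs_less_iff)
      with coef show "(\<lambda>k. coef k * complex_of_real (y - x) ^ k) sums g y"
        by blast
    qed
    ultimately show "\<exists>r>0. \<exists>G. G holomorphic_on ball (complex_of_real x) r \<and>
        (\<forall>y\<in>ball x r. G (complex_of_real y) = g y)"
      by blast
  qed
  with gf that show ?thesis
    by blast
qed

lemma real_analytic_on_limpt_zeros_imp_interior:
  assumes h: "h real_analytic_on S" and "x \<in> S" and limpt: "x islimpt {y. h y = 0}"
  shows "x \<in> interior {y. h y = 0}"
proof -
  from assms obtain r g where "r > 0" and g: "g holomorphic_on ball (complex_of_real x) r"
    and gh: "\<forall>y\<in>ball x r. g (complex_of_real y) = h y"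
    unfolding real_analytic_on_def by meson
  let ?U = "complex_of_real ` ({y. h y = 0} \<inter> ball x r)"
  have "x islimpt {y. h y = 0} \<inter> ball x r"
    using islimpt_Int_eventually[OF limpt eventually_at_in_open'] \<open>r > 0\<close> by simp
  then have limpt_U: "complex_of_real x islimpt ?U"
    by (rule islimpt_isCont_image) (auto simp: eventually_at_filter)
  have U_ball: "?U \<subseteq> ball (complex_of_real x) r"
    by auto
  have "g z = 0" if "z \<in> ball (complex_of_real x) r" for z
    by (rule analytic_continuation[OF g open_ball connected_ball U_ball _ limpt_U _ that])
       (use \<open>r > 0\<close> gh in auto)
  then have "ball x r \<subseteq> {y. h y = 0}"
    using gh by force
  with \<open>r > 0\<close> show ?thesis
    by (auto simp: mem_interior)
qed

lemma real_analytic_on_Icc_zeros: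
  assumes h: "h real_analytic_on {a..b}"
  shows "(\<forall>x\<in>{a..b}. h x = 0) \<or> finite {x\<in>{a..b}. h x = 0}"
proof (rule disjCI)
  assume "infinite {x\<in>{a..b}. h x = 0}"
  then obtain p where "p \<in> {a..b}" "p islimpt {x\<in>{a..b}. h x = 0}"
    using Heine_Borel_imp_Bolzano_Weierstrass[OF compact_Icc] by blast
  define K where "K = {a..b} \<inter> interior {x. h x = 0}"
  have "openin (top_of_set {a..b}) K"
    by (auto simp: K_def)
  moreover have "closedin (top_of_set {a..b}) K"
    unfolding closedin_limpt
  proof (intro conjI allI impI)
    fix x assume x: "x islimpt K \<and> x \<in> {a..b}"
    have "K \<subseteq> {x. h x = 0}"
      using interior_subset by (auto simp: K_def)
    with x have "x islimpt {x. h x = 0}"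
      by (auto intro: islimpt_subset)
    with x show "x \<in> K"
      by (auto simp: K_def intro: real_analytic_on_limpt_zeros_imp_interior[OF h])
  qed (auto simp: K_def)
  moreover have "p \<in> K"
    using \<open>p \<in> {a..b}\<close> \<open>p islimpt _\<close>
    by (auto simp: K_def intro: real_analytic_on_limpt_zeros_imp_interior[OF h] islimpt_subset)
  ultimately have "K = {a..b}"
    using connected_Icc[of a b] unfolding connected_clopen by blast
  then show "\<forall>x\<in>{a..b}. h x = 0"
    using interior_subset unfolding K_def by blast
qed

section \<open>Traces of powers and the Vandermonde determinant\<close>

definition mat_trace :: "'a::comm_ring_1 mat \<Rightarrow> 'a" where
  "mat_trace A = (\<Sum>i<dim_row A. A $$ (i, i))"

lemma mat_trace_mult_comm:
  assumes A: "A \<in> carrier_mat n k" and B: "B \<in> carrier_mat k n"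
  shows "mat_trace (A * B) = mat_trace (B * A)"
proof -
  have "mat_trace (A * B) = (\<Sum>i<n. \<Sum>j<k. A $$ (i, j) * B $$ (j, i))"
    using A B by (auto simp: mat_trace_def scalar_prod_def atLeast0LessThan intro!: sum.cong)
  also have "\<dots> = (\<Sum>j<k. \<Sum>i<n. B $$ (j, i) * A $$ (i, j))"
    by (subst sum.swap) (simp add: mult.commute)
  also have "\<dots> = mat_trace (B * A)"
    using A B by (auto simp: mat_trace_def scalar_prod_def atLeast0LessThan intro!: sum.cong)
  finally show ?thesis .
qed

lemma mat_trace_eq_sum_list_diag_mat: "mat_trace A = sum_list (diag_mat A)"
  by (simp add: mat_trace_def diag_mat_def sum_list_sum_nth atLeast0LessThan)

lemma upper_triangular_mult:
  assumes A: "A \<in> carrier_mat n n" and B: "B \<in> carrier_mat n n"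
    and uA: "upper_triangular A" and uB: "upper_triangular B"
  shows "upper_triangular (A * B)"
    and "diag_mat (A * B) = map2 (*) (diag_mat A) (diag_mat B)"
proof -
  have entry: "(A * B) $$ (i, j) = (\<Sum>l\<in>{0..<n}. A $$ (i, l) * B $$ (l, j))"
    if "i < n" "j < n" for i j
    using A B that by (simp add: scalar_prod_def)
  have vanish: "A $$ (i, l) * B $$ (l, j) = 0" if "l < n" "i < n" "l < i \<or> j < l" for i j l
    using that A B uA uB by (auto dest: upper_triangularD)
  show "upper_triangular (A * B)"
  proof (rule upper_triangularI)
    fix i j assume "j < i" "i < dim_row (A * B)"
    with A have "i < n" "j < n"
      by auto
    with \<open>j < i\<close> show "(A * B) $$ (i, j) = 0"
      unfolding entry[OF \<open>i < n\<close> \<open>j < n\<close>] by (auto intro!: sum.neutral vanish)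
  qed
  have "(A * B) $$ (i, i) = A $$ (i, i) * B $$ (i, i)" if "i < n" for i
  proof -
    have "(\<Sum>l\<in>{0..<n} - {i}. A $$ (i, l) * B $$ (l, i)) = 0"
      using that by (intro sum.neutral) (auto intro!: vanish)
    then have "(\<Sum>l\<in>{0..<n}. A $$ (i, l) * B $$ (l, i)) = A $$ (i, i) * B $$ (i, i)"
      using that by (simp add: sum.remove[of _ i])
    then show ?thesis
      using that by (simp add: entry)
  qed
  then show "diag_mat (A * B) = map2 (*) (diag_mat A) (diag_mat B)"
    using A B by (auto simp: diag_mat_def intro!: nth_equalityI)
qed

lemma upper_triangular_pow:
  assumes A: "A \<in> carrier_mat n n" and uA: "upper_triangular A"
  shows "upper_triangular (A ^\<^sub>m k) \<and> diag_mat (A ^\<^sub>m k) = map (\<lambda>a. a ^ k) (diag_mat A)"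
proof (induction k)
  case 0
  then show ?case
    using A by (auto simp: diag_mat_def)
next
  case (Suc k)
  then show ?case
    using upper_triangular_mult[OF pow_carrier_mat[OF A] A _ uA, of k]
    by (auto simp: zip_map1 zip_same_conv_map power_commutes)
qed

lemma mat_trace_pow_eq_power_sum:
  fixes B :: "'a::conjugatable_ordered_field mat"
  assumes B: "B \<in> carrier_mat n n" and es: "char_poly B = (\<Prod>e\<leftarrow>es. [:- e, 1:])"
  shows "mat_trace (B ^\<^sub>m k) = (\<Sum>e\<leftarrow>es. e ^ k)"
proof -
  obtain T P Q where "schur_decomposition B es = (T, P, Q)"
    by (cases "schur_decomposition B es") auto
  from schur_decomposition[OF B es this]
  have wit: "similar_mat_wit B T P Q" and uT: "upper_triangular T" and dT: "diag_mat T = es"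
    by auto
  from wit B have T: "T \<in> carrier_mat n n" and P: "P \<in> carrier_mat n n"
    and Q: "Q \<in> carrier_mat n n" and QP: "Q * P = 1\<^sub>m n"
    unfolding similar_mat_wit_def Let_def by auto
  have "mat_trace (B ^\<^sub>m k) = mat_trace ((P * T ^\<^sub>m k) * Q)"
    by (simp add: similar_mat_wit_pow_id[OF wit])
  also have "\<dots> = mat_trace (Q * (P * T ^\<^sub>m k))"
    by (rule mat_trace_mult_comm[of _ n n]) (use P T Q in auto)
  also have "Q * (P * T ^\<^sub>m k) = T ^\<^sub>m k"
    using P Q T QP by (simp add: assoc_mult_mat[symmetric, of _ n n _ n _ n])
  also have "mat_trace (T ^\<^sub>m k) = (\<Sum>e\<leftarrow>es. e ^ k)"
    using upper_triangular_pow[OF T uT, of k] dT by (simp add: mat_trace_eq_sum_list_diag_mat)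
  finally show ?thesis .
qed

lemma det_vandermonde_eq_0_iff:
  fixes xs :: "'a::idom list"
  shows "Determinant.det (Matrix.mat (length xs) (length xs) (\<lambda>(l, i). xs ! l ^ i)) = 0 \<longleftrightarrow> \<not> distinct xs"
    (is "Determinant.det ?V = 0 \<longleftrightarrow> _")
proof
  let ?n = "length xs"
  assume "Determinant.det ?V = 0"
  then obtain v where v: "v \<in> carrier_vec ?n" "v \<noteq> 0\<^sub>v ?n" "?V *\<^sub>v v = 0\<^sub>v ?n"
    using det_0_iff_vec_prod_zero[of ?V ?n] by auto
  \<comment> \<open>a kernel vector of the Vandermonde matrix is a nonzero polynomial of degree \<open>< n\<close>
     vanishing on all of \<open>xs\<close>\<close>
  define p where "p = (\<Sum>i<?n. monom (v $ i) i)"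
  have coeff_p: "coeff p j = (if j < ?n then v $ j else 0)" for j
    unfolding p_def by (simp add: coeff_sum)
  obtain i where "i < ?n" "v $ i \<noteq> 0"
    using v(1,2) by (metis carrier_vecD eq_vecI index_zero_vec)
  then have "coeff p i \<noteq> 0"
    by (simp add: coeff_p)
  then have "p \<noteq> 0"
    by auto
  have "degree p < ?n"
    using \<open>p \<noteq> 0\<close> by (intro degree_lessI) (auto simp: coeff_p)
  have "set xs \<subseteq> {x. poly p x = 0}"
  proof
    fix x assume "x \<in> set xs"
    then obtain l where l: "l < ?n" "x = xs ! l"
      by (auto simp: in_set_conv_nth)
    have "poly p x = (?V *\<^sub>v v) $ l"
      using l v(1) by (simp add: p_def poly_sum poly_monom scalar_prod_def atLeast0LessThan mult.commute)
    then show "x \<in> {x. poly p x = 0}"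
      using v(3) l by simp
  qed
  then have "card (set xs) \<le> degree p"
    using card_mono[OF poly_roots_finite[OF \<open>p \<noteq> 0\<close>]] card_poly_roots_bound[OF \<open>p \<noteq> 0\<close>]
    by (meson le_trans)
  with \<open>degree p < ?n\<close> show "\<not> distinct xs"
    using distinct_card by fastforce
next
  assume "\<not> distinct xs"
  then obtain i j where ij: "i < length xs" "j < length xs" "i \<noteq> j" "xs ! i = xs ! j"
    by (auto simp: distinct_conv_nth)
  show "Determinant.det ?V = 0"
    by (rule Determinant.det_identical_rows[OF _ ij(3) ij(1) ij(2)]) (use ij in \<open>auto intro!: eq_vecI\<close>)
qed

section \<open>Repeated singular values\<close>

lemma conj_transpose_carrier_mat: "A \<in> carrier_mat m n \<Longrightarrow> conj_transpose A \<in> carrier_mat n m"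
  by (simp add: conj_transpose_def)

lemma conj_transpose_mult_vec_cscalar_prod:
  assumes A: "A \<in> carrier_mat m n" and v: "v \<in> carrier_vec n" and w: "w \<in> carrier_vec m"
  shows "(conj_transpose A *\<^sub>v w) \<bullet>c v = w \<bullet>c (A *\<^sub>v v)"
proof -
  have "(conj_transpose A *\<^sub>v w) \<bullet>c v = (\<Sum>i<n. \<Sum>k<m. cnj (A $$ (k, i)) * w $ k * cnj (v $ i))"
    using A v w by (simp add: scalar_prod_def conj_transpose_def atLeast0LessThan sum_distrib_right)
  also have "\<dots> = (\<Sum>k<m. \<Sum>i<n. w $ k * cnj (A $$ (k, i) * v $ i))"
    by (subst sum.swap) (simp add: mult_ac)
  also have "\<dots> = w \<bullet>c (A *\<^sub>v v)"
    using A v w by (simp add: scalar_prod_def atLeast0LessThan sum_distrib_left)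
  finally show ?thesis .
qed

text \<open>In the order of \<^theory>\<open>HOL-Library.Complex_Order\<close>, \<open>0 \<le> e\<close> says that \<open>e\<close> is a nonnegative real.\<close>
lemma complex_nonneg_if_mult_pos_nonneg:
  fixes e s :: complex
  assumes "0 < s" and "0 \<le> e * s"
  shows "0 \<le> e"
  using assms by (auto simp: less_eq_complex_def less_complex_def zero_le_mult_iff)

lemma eigenvalue_conj_transpose_mult_nonneg:
  assumes A: "A \<in> carrier_mat m n" and "eigenvalue (conj_transpose A * A) e"
  shows "0 \<le> e"
proof -
  from assms obtain v where v: "v \<in> carrier_vec n" "v \<noteq> 0\<^sub>v n"
    and ev: "(conj_transpose A * A) *\<^sub>v v = e \<cdot>\<^sub>v v"
    unfolding eigenvalue_def eigenvector_def using conj_transpose_carrier_mat[OF A] by auto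
  have Av: "A *\<^sub>v v \<in> carrier_vec m"
    using A v by simp
  have "e * (v \<bullet>c v) = ((conj_transpose A * A) *\<^sub>v v) \<bullet>c v"
    using v by (simp add: ev)
  also have "\<dots> = (A *\<^sub>v v) \<bullet>c (A *\<^sub>v v)"
    by (simp add: assoc_mult_mat_vec[OF conj_transpose_carrier_mat[OF A] A v(1)]
        conj_transpose_mult_vec_cscalar_prod[OF A v(1) Av])
  finally have "0 \<le> e * (v \<bullet>c v)"
    by (metis conjugate_square_ge_0_vec)
  moreover have "0 < v \<bullet>c v"
    using v by simp
  ultimately show ?thesis
    by (rule complex_nonneg_if_mult_pos_nonneg[rotated])
qed

lemma proots_prod_list_linear_factors: "proots (\<Prod>e\<leftarrow>es. [:- e, 1:]) = mset es"
proof (induction es)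
  case (Cons e es)
  have "(\<Prod>e\<leftarrow>es. [:- e, 1:]) \<noteq> 0"
    by (auto simp: prod_list_zero_iff)
  then show ?case
    using Cons.IH by (simp add: proots_mult del: mult_pCons_left)
qed simp

lemma count_mset_ge_2_iff_not_distinct: "(\<exists>s. 2 \<le> count (mset xs) s) \<longleftrightarrow> \<not> distinct xs"
proof
  assume "\<exists>s. 2 \<le> count (mset xs) s"
  then obtain s where "2 \<le> count (mset xs) s" ..
  moreover have "count (mset xs) s = (if s \<in> set xs then 1 else 0)" if "distinct xs"
    using that distinct_count_atmost_1 by metis
  ultimately show "\<not> distinct xs"
    by (auto split: if_splits)
next
  assume "\<not> distinct xs"
  then obtain s where s: "count (mset xs) s \<noteq> (if s \<in> set xs then 1 else 0)"
    by (auto simp: distinct_count_atmost_1)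
  have "2 \<le> count (mset xs) s"
  proof (cases "s \<in> set xs")
    case True
    with s have "count (mset xs) s \<noteq> 1" "count (mset xs) s \<noteq> 0"
      by simp_all
    then show ?thesis
      by presburger
  qed (use s in simp)
  then show "\<exists>s. 2 \<le> count (mset xs) s" ..
qed

text \<open>The Hankel matrix of the power sums of the eigenvalues \<open>e\<^sub>l\<close> of \<open>A\<^sup>* A\<close> is \<open>V\<^sup>T V\<close> for the
  Vandermonde matrix \<open>V = (e\<^sub>l ^ i)\<close>, so this is the discriminant of the characteristic polynomial
  of \<open>A\<^sup>* A\<close>, written as a polynomial in the entries of \<open>A\<close> and their conjugates.\<close>
definition singular_value_discriminant :: "complex mat \<Rightarrow> complex" where
  "singular_value_discriminant A =
     Determinant.det (Matrix.mat (dim_col A) (dim_col A)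
       (\<lambda>(i, j). mat_trace ((conj_transpose A * A) ^\<^sub>m (i + j))))"

lemma singular_value_discriminant_eq_det_vandermonde_square:
  assumes A: "A \<in> carrier_mat m n"
    and es: "char_poly (conj_transpose A * A) = (\<Prod>e\<leftarrow>es. [:- e, 1:])" and "length es = n"
  shows "singular_value_discriminant A = Determinant.det (Matrix.mat n n (\<lambda>(l, i). es ! l ^ i)) ^ 2"
proof -
  define V where "V = Matrix.mat n n (\<lambda>(l, i). es ! l ^ i)"
  have V: "V \<in> carrier_mat n n"
    by (simp add: V_def)
  have B: "conj_transpose A * A \<in> carrier_mat n n"
    using A conj_transpose_carrier_mat[OF A] by simp
  have "Matrix.mat n n (\<lambda>(i, j). mat_trace ((conj_transpose A * A) ^\<^sub>m (i + j))) = transpose_mat V * V"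
    using \<open>length es = n\<close>
    by (auto simp: mat_trace_pow_eq_power_sum[OF B es] V_def scalar_prod_def sum_list_sum_nth
        power_add mult.commute intro!: eq_matI)
  then have "singular_value_discriminant A = Determinant.det (transpose_mat V * V)"
    using A by (simp add: singular_value_discriminant_def)
  also have "\<dots> = Determinant.det V ^ 2"
    using V by (simp add: Determinant.det_mult[of _ n] Determinant.det_transpose power2_eq_square)
  finally show ?thesis
    by (simp add: V_def)
qed

lemma has_repeated_singular_values_iff_discriminant:
  assumes A: "A \<in> carrier_mat m n"
  shows "has_repeated_singular_values A \<longleftrightarrow> singular_value_discriminant A = 0"
proof -
  let ?B = "conj_transpose A * A"
  have B: "?B \<in> carrier_mat n n"
    using A conj_transpose_carrier_mat[OF A] by simp
  obtain es where es: "char_poly ?B = (\<Prod>e\<leftarrow>es. [:- e, 1:])" and "length es = n"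
    using char_poly_factorized[OF B] by blast
  have "0 \<le> e" if "e \<in> set es" for e
  proof (rule eigenvalue_conj_transpose_mult_nonneg[OF A])
    show "eigenvalue ?B e"
      using that by (simp add: eigenvalue_root_char_poly[OF B] es poly_prod_list_zero_iff)
  qed
  then have "inj_on (\<lambda>z. sqrt (Re z)) (set es)"
    by (intro inj_onI) (auto simp: less_eq_complex_def complex_eq_iff)
  have "has_repeated_singular_values A \<longleftrightarrow>
      (\<exists>s. 2 \<le> count (mset (map (\<lambda>z. sqrt (Re z)) es)) s)"
    by (simp add: has_repeated_singular_values_def singular_values_def es
        proots_prod_list_linear_factors)
  also have "\<dots> \<longleftrightarrow> \<not> distinct es"
    using \<open>inj_on _ (set es)\<close> by (simp only: count_mset_ge_2_iff_not_distinct distinct_map) simp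
  also have "\<dots> \<longleftrightarrow> singular_value_discriminant A = 0"
    using det_vandermonde_eq_0_iff[of es] \<open>length es = n\<close>
    by (simp add: singular_value_discriminant_eq_det_vandermonde_square[OF A es])
  finally show ?thesis .
qed

section \<open>Real-analytic matrix functions\<close>

definition real_analytic_mat_on :: "real set \<Rightarrow> nat \<Rightarrow> nat \<Rightarrow> (real \<Rightarrow> complex mat) \<Rightarrow> bool" where
  "real_analytic_mat_on S p q M \<longleftrightarrow>
     (\<forall>x. M x \<in> carrier_mat p q) \<and> (\<forall>i<p. \<forall>j<q. (\<lambda>x. M x $$ (i, j)) real_analytic_on S)"

lemma real_analytic_mat_onD:
  assumes "real_analytic_mat_on S p q M"
  shows "M x \<in> carrier_mat p q" "dim_row (M x) = p" "dim_col (M x) = q"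
    and "i < p \<Longrightarrow> j < q \<Longrightarrow> (\<lambda>x. M x $$ (i, j)) real_analytic_on S"
  using assms by (auto simp: real_analytic_mat_on_def)

lemma real_analytic_mat_onI:
  assumes "\<And>x. M x \<in> carrier_mat p q"
    and "\<And>i j. i < p \<Longrightarrow> j < q \<Longrightarrow> (\<lambda>x. M x $$ (i, j)) real_analytic_on S"
  shows "real_analytic_mat_on S p q M"
  using assms by (simp add: real_analytic_mat_on_def)

lemma real_analytic_mat_on_conj_transpose:
  assumes M: "real_analytic_mat_on S p q M"
  shows "real_analytic_mat_on S q p (\<lambda>x. conj_transpose (M x))"
proof (rule real_analytic_mat_onI)
  fix i j assume "i < q" "j < p"
  with M have "(\<lambda>x. cnj (M x $$ (j, i))) real_analytic_on S"
    by (simp add: real_analytic_mat_on_def real_analytic_on_cnj)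
  moreover have "(\<lambda>x. cnj (M x $$ (j, i))) = (\<lambda>x. conj_transpose (M x) $$ (i, j))"
    using real_analytic_mat_onD(2,3)[OF M] \<open>i < q\<close> \<open>j < p\<close>
    by (intro ext) (simp add: conj_transpose_def)
  ultimately show "(\<lambda>x. conj_transpose (M x) $$ (i, j)) real_analytic_on S"
    by simp
qed (use M in \<open>simp add: real_analytic_mat_on_def conj_transpose_carrier_mat\<close>)

lemma real_analytic_mat_on_mult:
  assumes M: "real_analytic_mat_on S p q M" and N: "real_analytic_mat_on S q r N"
  shows "real_analytic_mat_on S p r (\<lambda>x. M x * N x)"
proof (rule real_analytic_mat_onI)
  fix i j assume "i < p" "j < r"
  with M N have "(\<lambda>x. \<Sum>l\<in>{0..<q}. M x $$ (i, l) * N x $$ (l, j)) real_analytic_on S"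
    by (auto simp: real_analytic_mat_on_def intro!: real_analytic_on_sum real_analytic_on_mult)
  moreover have "(\<lambda>x. \<Sum>l\<in>{0..<q}. M x $$ (i, l) * N x $$ (l, j)) = (\<lambda>x. (M x * N x) $$ (i, j))"
    using real_analytic_mat_onD(2,3)[OF M] real_analytic_mat_onD(2,3)[OF N] \<open>i < p\<close> \<open>j < r\<close>
    by (intro ext) (simp add: scalar_prod_def)
  ultimately show "(\<lambda>x. (M x * N x) $$ (i, j)) real_analytic_on S"
    by simp
qed (rule mult_carrier_mat[OF real_analytic_mat_onD(1)[OF M] real_analytic_mat_onD(1)[OF N]])

lemma real_analytic_mat_on_pow:
  assumes M: "real_analytic_mat_on S p p M"
  shows "real_analytic_mat_on S p p (\<lambda>x. M x ^\<^sub>m k)"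
proof (induction k)
  case 0
  have "real_analytic_mat_on S p p (\<lambda>x. 1\<^sub>m p)"
    by (auto simp: real_analytic_mat_on_def real_analytic_on_const)
  moreover have "(\<lambda>x. M x ^\<^sub>m 0) = (\<lambda>x. 1\<^sub>m p)"
    using real_analytic_mat_onD(2)[OF M] by simp
  ultimately show ?case
    by simp
next
  case (Suc k)
  then show ?case
    using real_analytic_mat_on_mult[OF Suc M] by simp
qed

lemma real_analytic_on_mat_trace:
  assumes M: "real_analytic_mat_on S p p M"
  shows "(\<lambda>x. mat_trace (M x)) real_analytic_on S"
proof -
  have "(\<lambda>x. \<Sum>i<p. M x $$ (i, i)) real_analytic_on S"
    using M by (auto simp: real_analytic_mat_on_def intro: real_analytic_on_sum)
  moreover have "(\<lambda>x. \<Sum>i<p. M x $$ (i, i)) = (\<lambda>x. mat_trace (M x))"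
    using real_analytic_mat_onD(2)[OF M] by (simp add: mat_trace_def)
  ultimately show ?thesis
    by simp
qed

lemma real_analytic_on_det:
  assumes M: "real_analytic_mat_on S p p M"
  shows "(\<lambda>x. Determinant.det (M x)) real_analytic_on S"
proof -
  have "(\<lambda>x. \<Sum>\<pi> | \<pi> permutes {0..<p}. signof \<pi> * (\<Prod>i = 0..<p. M x $$ (i, \<pi> i))) real_analytic_on S"
  proof (intro real_analytic_on_sum real_analytic_on_mult real_analytic_on_const real_analytic_on_prod)
    fix \<pi> i assume "\<pi> \<in> {\<pi>. \<pi> permutes {0..<p}}" "i \<in> {0..<p}"
    then have "\<pi> i < p"
      by (auto simp: permutes_in_image)
    with M \<open>i \<in> {0..<p}\<close> show "(\<lambda>x. M x $$ (i, \<pi> i)) real_analytic_on S"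
      by (simp add: real_analytic_mat_on_def)
  qed (simp_all add: finite_permutations)
  moreover have "(\<lambda>x. \<Sum>\<pi> | \<pi> permutes {0..<p}. signof \<pi> * (\<Prod>i = 0..<p. M x $$ (i, \<pi> i))) =
      (\<lambda>x. Determinant.det (M x))"
    by (intro ext) (simp add: Determinant.det_def'[OF real_analytic_mat_onD(1)[OF M]])
  ultimately show ?thesis
    by simp
qed

lemma real_analytic_on_singular_value_discriminant:
  assumes M: "real_analytic_mat_on S m n M"
  shows "(\<lambda>x. singular_value_discriminant (M x)) real_analytic_on S"
proof -
  let ?B = "\<lambda>x. conj_transpose (M x) * M x"
  have B: "real_analytic_mat_on S n n ?B"
    by (rule real_analytic_mat_on_mult[OF real_analytic_mat_on_conj_transpose[OF M] M])
  have "real_analytic_mat_on S n n (\<lambda>x. Matrix.mat n n (\<lambda>(i, j). mat_trace (?B x ^\<^sub>m (i + j))))"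
    by (auto simp: real_analytic_mat_on_def
        intro!: real_analytic_on_mat_trace real_analytic_mat_on_pow[OF B])
  from real_analytic_on_det[OF this] show ?thesis
    using real_analytic_mat_onD(3)[OF M] by (simp add: singular_value_discriminant_def)
qed

lemma analytic_entries_imp_real_analytic_mat_on:
  assumes "\<forall>x\<in>{a..b}. F x \<in> carrier_mat m n"
    and "\<forall>i<m. \<forall>j<n. analytic_on_interval a b (\<lambda>x. F x $$ (i, j))"
  obtains G where "real_analytic_mat_on {a..b} m n G" "\<forall>x\<in>{a..b}. G x = F x"
proof -
  have "\<exists>g. g real_analytic_on {a..b} \<and> (\<forall>x\<in>{a..b}. g x = F x $$ ij)"
    if "fst ij < m" "snd ij < n" for ij
  proof -
    from assms(2) that have "analytic_on_interval a b (\<lambda>x. F x $$ ij)"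
      by (cases ij) auto
    then obtain g where "g real_analytic_on {a..b}" "\<forall>x\<in>{a..b}. g x = F x $$ ij"
      by (rule analytic_on_interval_imp_real_analytic_on)
    then show ?thesis
      by blast
  qed
  then obtain g where g: "\<And>i j. i < m \<Longrightarrow> j < n \<Longrightarrow>
      g (i, j) real_analytic_on {a..b} \<and> (\<forall>x\<in>{a..b}. g (i, j) x = F x $$ (i, j))"
    by (metis fst_conv snd_conv)
  define G where "G x = Matrix.mat m n (\<lambda>ij. g ij x)" for x
  have "real_analytic_mat_on {a..b} m n G"
    using g by (auto simp: real_analytic_mat_on_def G_def)
  moreover have "\<forall>x\<in>{a..b}. G x = F x"
    using g assms(1) by (auto simp: G_def intro!: eq_matI)
  ultimately show ?thesis
    using that by blast
qed

theorem theorem4p5: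
  fixes m n :: nat and a b :: real and F :: "real \<Rightarrow> complex mat"
  assumes "n \<le> m" and "a < b"
    and "\<forall>x\<in>{a..b}. F x \<in> carrier_mat m n"
    and "\<forall>i<m. \<forall>j<n. analytic_on_interval a b (\<lambda>x. F x $$ (i, j))"
  shows "{x\<in>{a..b}. has_repeated_singular_values (F x)} = {a..b} \<or>
         finite {x\<in>{a..b}. has_repeated_singular_values (F x)}"
proof -
  obtain G where G: "real_analytic_mat_on {a..b} m n G" and GF: "\<forall>x\<in>{a..b}. G x = F x"
    using analytic_entries_imp_real_analytic_mat_on[OF assms(3,4)] by blast
  have "has_repeated_singular_values (F x) \<longleftrightarrow> singular_value_discriminant (G x) = 0"
    if "x \<in> {a..b}" for x
    using has_repeated_singular_values_iff_discriminant[of "F x" m n] assms(3) GF that by simp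
  then have "{x\<in>{a..b}. has_repeated_singular_values (F x)} =
      {x\<in>{a..b}. singular_value_discriminant (G x) = 0}"
    by auto
  with real_analytic_on_Icc_zeros[OF real_analytic_on_singular_value_discriminant[OF G]]
  show ?thesis
    by auto
qed

end
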